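(* Under the standing assumptions of the context, suppose $\mathcal{C}_{\mathbb{R}}$ is in pseudo-generic position with respect to the $(x,y)$-plane. Let $i\in\{1,\dots,m\}$ and $(\alpha,\beta,\gamma)\in\mathcal{C}_{\mathbb{R}}$ with $\Delta_i(\alpha,\beta)=0$ and $\mathrm{sr}_{i,i}(\alpha,\beta)\neq0$. Then $$\gamma=-\frac{\mathrm{sr}_{i,i-1}(\alpha,\beta)}{i\,\mathrm{sr}_{i,i}(\alpha,\beta)}.$$
   Context: Subresultants: let $\mathbb{A}$ be an integral domain, $P=\sum_{i=0}^p a_iT^i$, $Q=\sum_{i=0}^q b_iT^i\in\mathbb{A}[T]$ with $a_pb_q\neq0$ and $p>q$. For $0\le k\le q$, let $M_k(P,Q)$ be the $(p+q-2k)\times(p+q-k)$ matrix whose rows are the coefficient vectors, in the basis $1,T,\dots,T^{p+q-k-1}$ (columns indexed $0,\dots,p+q-k-1$), of $P,TP,\dots,T^{q-k-1}P$ followed by $Q,TQ,\dots,T^{p-k-1}Q$. For $0\le j\le k$, $\mathrm{sr}_{k,j}$ is the determinant of the square matrix formed by column $j$ followed by the last $p+q-2k-1$ columns of $M_k(P,Q)$; $\mathrm{Sr}_k=\sum_{j=0}^k\mathrm{sr}_{k,j}T^j$ and $\mathrm{sr}_{k,k}$ is its principal coefficient; $\mathrm{Sr}_0=\mathrm{sr}_{0,0}$ is the resultant. Standing assumptions: $P_1,P_2\in\mathbb{Q}[X,Y,Z]$ with $\gcd(P_1,P_2)=1$, $\deg_Z P_\ell=\deg P_\ell$ for $\ell=1,2$,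 and $\deg_ZP_1>m:=\deg_ZP_2\ge1$. $\mathrm{Sr}_j(X,Y,Z)=\sum_{i=0}^j\mathrm{sr}_{j,i}(X,Y)Z^i$, $0\le j\le m$, are the subresultants of $P_1,P_2$ with respect to $Z$ over $\mathbb{Q}[X,Y]$. $h$ is the square-free part of $\mathrm{Res}_Z(P_1,P_2)$. $\Theta_0=h$, $\Theta_i=\gcd(\Theta_{i-1},\mathrm{sr}_{i,i})$, $\Delta_i=\Theta_{i-1}/\Theta_i$ for $i=1,\dots,m$. $\mathcal{C}_{\mathbb{C}}=\{(x,y,z)\in\mathbb{C}^3:P_1=P_2=0\}$, $\mathcal{C}_{\mathbb{R}}=\mathcal{C}_{\mathbb{C}}\cap\mathbb{R}^3$, $\Pi_z(x,y,z)=(x,y)$. Pseudo-generic position with respect to the $(x,y)$-plane: there is a finite set $F\subset\mathbb{C}^2$ such that every point of $\Pi_z(\mathcal{C}_{\mathbb{C}})\setminus F$ has exactly one preimage in $\mathcal{C}_{\mathbb{C}}$. *)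

theory Defs
  imports "HOL-Computational_Algebra.Computational_Algebra" "HOL-Computational_Algebra.Field_as_Ring" "Jordan_Normal_Form.Determinant"
begin

text \<open>Trivariate polynomials in Q[X,Y,Z] are represented as nested univariate
polynomials of type rat poly poly poly: the outermost variable is Z, then Y,
and the innermost variable is X. Hence Q[X,Y] is rat poly poly (outer Y, inner X).\<close>

text \<open>Entry (r,c) of the matrix M_k(P,Q): rows 0..q-k-1 are T^r P, rows
q-k .. p+q-2k-1 are T^s Q, columns indexed by the exponent of T.\<close>
definition sub_mat_entry :: "'a::comm_ring_1 poly \<Rightarrow> 'a poly \<Rightarrow> nat \<Rightarrow> nat \<Rightarrow> nat \<Rightarrow> 'a" where
  "sub_mat_entry P Q k r c =
     (if r < degree Q - k
      then (if r \<le> c then coeff P (c - r) else 0)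
      else (let s = r - (degree Q - k) in if s \<le> c then coeff Q (c - s) else 0))"

text \<open>sr_{k,j}(P,Q): determinant of column j followed by the last p+q-2k-1 columns
(columns k+1, ..., p+q-k-1) of M_k(P,Q).\<close>
definition sres_coeff :: "'a::comm_ring_1 poly \<Rightarrow> 'a poly \<Rightarrow> nat \<Rightarrow> nat \<Rightarrow> 'a" where
  "sres_coeff P Q k j =
     (let n = degree P + degree Q - 2 * k
      in det (mat n n (\<lambda>(r, c). sub_mat_entry P Q k r (if c = 0 then j else k + c))))"

definition total_degree3 :: "'a::zero poly poly poly \<Rightarrow> nat" where
  "total_degree3 P = Max (insert 0 {i + j + k | i j k. coeff (coeff (coeff P k) j) i \<noteq> 0})"

definition sqfree_part :: "'a::{factorial_semiring, normalization_semidom_multiplicative} \<Rightarrow> 'a" where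
  "sqfree_part p = (\<Prod>q\<in>prime_factors p. q)"

definition eval2 :: "rat poly poly \<Rightarrow> 'b::field_char_0 \<Rightarrow> 'b \<Rightarrow> 'b" where
  "eval2 p x y = poly (map_poly (\<lambda>c. poly (map_poly of_rat c) x) p) y"

definition eval3 :: "rat poly poly poly \<Rightarrow> 'b::field_char_0 \<Rightarrow> 'b \<Rightarrow> 'b \<Rightarrow> 'b" where
  "eval3 P x y z = poly (map_poly (\<lambda>c. eval2 c x y) P) z"

fun Theta :: "rat poly poly poly \<Rightarrow> rat poly poly poly \<Rightarrow> nat \<Rightarrow> rat poly poly" where
  "Theta P1 P2 0 = sqfree_part (sres_coeff P1 P2 0 0)"
| "Theta P1 P2 (Suc i) = gcd (Theta P1 P2 i) (sres_coeff P1 P2 (Suc i) (Suc i))"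

definition Delta :: "rat poly poly poly \<Rightarrow> rat poly poly poly \<Rightarrow> nat \<Rightarrow> rat poly poly" where
  "Delta P1 P2 i = Theta P1 P2 (i - 1) div Theta P1 P2 i"

definition curveC :: "rat poly poly poly \<Rightarrow> rat poly poly poly \<Rightarrow> (complex \<times> complex \<times> complex) set" where
  "curveC P1 P2 = {(x, y, z). eval3 P1 x y z = 0 \<and> eval3 P2 x y z = 0}"

definition curveR :: "rat poly poly poly \<Rightarrow> rat poly poly poly \<Rightarrow> (real \<times> real \<times> real) set" where
  "curveR P1 P2 = {(x, y, z). eval3 P1 x y z = 0 \<and> eval3 P2 x y z = 0}"

definition pseudo_generic :: "rat poly poly poly \<Rightarrow> rat poly poly poly \<Rightarrow> bool" where
  "pseudo_generic P1 P2 \<longleftrightarrow>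
     (\<exists>F :: (complex \<times> complex) set. finite F \<and>
        (\<forall>(x, y) \<in> (\<lambda>(x, y, z). (x, y)) ` curveC P1 P2 - F.
            \<exists>!z. (x, y, z) \<in> curveC P1 P2))"

end

theory Submission
  imports Defs "Jordan_Normal_Form.Char_Poly"
begin

(* For a point (x,y), specializing P1, P2 at (x,y) gives univariate polynomials p, q of the
   same degrees (the leading coefficients in Z are nonzero constants, by the total degree
   hypothesis), and subresultants commute with this specialization.
   Univariate theory: sr_{k,j} vanishes iff a low-degree syzygy U p + V q exists; hence if
   sr_{j,j} = 0 for j < i and sr_{i,i} = s \<noteq> 0, then gcd(p,q) has degree i and divides Sr_i,
   so Sr_i = s gcd(p,q).  If moreover p and q have a single common root z0, then
   Sr_i = s (Z - z0)^i, i.e. the power defect (i s)^i Sr_i - s (s' + i s Z)^i vanishes,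
   where s' = sr_{i,i-1}; conversely a vanishing defect forces every common root to be
   -s'/(i s).
   Where \<Delta>_i = 0, all sr_{j,j} with j < i vanish; pseudo-genericity gives single fibres
   outside a finite set, so each coefficient of the defect, multiplied by sr_{i,i}, vanishes
   on the zero set of \<Delta>_i minus a finite set.  A geometric lemma on plane curves (through a
   point where K \<noteq> 0 a curve f = 0 carries infinitely many points with K \<noteq> 0) extends this
   to every point of \<Delta>_i = 0, in particular to (\<alpha>,\<beta>), which yields the formula for \<gamma>. *)

subsection \<open>Subresultants as polynomial combinations\<close>

definition sres_row :: "'a::comm_ring_1 poly \<Rightarrow> 'a poly \<Rightarrow> nat \<Rightarrow> nat \<Rightarrow> 'a poly" where
  "sres_row P Q k r =
     (if r < degree Q - k then monom 1 r * P else monom 1 (r - (degree Q - k)) * Q)"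

lemma sub_mat_entry_sres_row: "sub_mat_entry P Q k r c = coeff (sres_row P Q k r) c"
  unfolding sub_mat_entry_def sres_row_def Let_def by (simp add: coeff_monom_mult)

definition sres_mat :: "'a::comm_ring_1 poly \<Rightarrow> 'a poly \<Rightarrow> nat \<Rightarrow> nat \<Rightarrow> 'a mat" where
  "sres_mat P Q k j = mat (degree P + degree Q - 2*k) (degree P + degree Q - 2*k)
     (\<lambda>(r, c). sub_mat_entry P Q k r (if c = 0 then j else k + c))"

definition sres_poly :: "'a::comm_ring_1 poly \<Rightarrow> 'a poly \<Rightarrow> nat \<Rightarrow> 'a poly" where
  "sres_poly P Q k = (\<Sum>j\<le>k. monom (sres_coeff P Q k j) j)"

lemma sres_coeff_det: "sres_coeff P Q k j = det (sres_mat P Q k j)"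
  by (simp add: sres_coeff_def sres_mat_def Let_def)

lemma sres_mat_carrier:
  "sres_mat P Q k j \<in> carrier_mat (degree P + degree Q - 2*k) (degree P + degree Q - 2*k)"
  by (simp add: sres_mat_def)

lemma sres_mat_index:
  "r < degree P + degree Q - 2*k \<Longrightarrow> c < degree P + degree Q - 2*k \<Longrightarrow>
   sres_mat P Q k j $$ (r, c) = coeff (sres_row P Q k r) (if c = 0 then j else k + c)"
  by (simp add: sres_mat_def sub_mat_entry_sres_row)

lemma coeff_sres_poly: "coeff (sres_poly P Q k) c = (if c \<le> k then sres_coeff P Q k c else 0)"
  unfolding sres_poly_def by (simp add: coeff_sum)

lemma coeff_sres_row_high:
  assumes "k \<le> degree Q" "k \<le> degree P" "r < degree P + degree Q - 2*k"
    and "degree P + degree Q - k \<le> c"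
  shows "coeff (sres_row P Q k r) c = 0"
proof (rule coeff_eq_0)
  have "degree (monom 1 n * R) \<le> n + degree R" for n and R :: "'a poly"
    by (metis add_le_mono1 degree_monom_le degree_mult_le order_trans)
  then show "degree (sres_row P Q k r) < c"
    using assms unfolding sres_row_def
    by (cases "r < degree Q - k") (fastforce intro: le_less_trans)+
qed

text \<open>Only column 0 of sres_mat depends on j, so its cofactors along that column do not.\<close>
lemma cofactor_sres_mat_col0: "cofactor (sres_mat P Q k j) r 0 = cofactor (sres_mat P Q k 0) r 0"
  unfolding cofactor_def
  by (rule arg_cong[where f="\<lambda>A. _ * det A"], rule eq_matI) (auto simp: mat_delete_def sres_mat_def)

lemma sres_coeff_laplace:
  assumes "0 < degree P + degree Q - 2*k"
  shows "sres_coeff P Q k j = (\<Sum>r<degree P + degree Q - 2*k.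
            coeff (sres_row P Q k r) j * cofactor (sres_mat P Q k 0) r 0)"
  using laplace_expansion_column[OF sres_mat_carrier assms]
  by (simp add: sres_coeff_det cofactor_sres_mat_col0[of P Q k j] sres_mat_index)

lemma sres_coeff_repeated_column:
  assumes "k < c" "c < degree P + degree Q - k"
  shows "det (sres_mat P Q k c) = 0"
proof (rule det_identical_columns[OF sres_mat_carrier, of 0 "c - k"])
  show "0 \<noteq> c - k" "0 < degree P + degree Q - 2*k" "c - k < degree P + degree Q - 2*k"
    using assms by auto
  show "col (sres_mat P Q k c) 0 = col (sres_mat P Q k c) (c - k)"
    using assms by (intro eq_vecI) (auto simp: sres_mat_def)
qed

lemma sres_poly_row_combination:
  assumes "k \<le> degree Q" "degree Q < degree P"
  shows "sres_poly P Q k = (\<Sum>r<degree P + degree Q - 2*k.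
            Polynomial.smult (cofactor (sres_mat P Q k 0) r 0) (sres_row P Q k r))"
proof (rule poly_eqI)
  fix c
  let ?n = "degree P + degree Q - 2*k"
  have n: "0 < ?n" using assms by auto
  have rhs: "coeff (\<Sum>r<?n. Polynomial.smult (cofactor (sres_mat P Q k 0) r 0) (sres_row P Q k r)) c
     = (\<Sum>r<?n. coeff (sres_row P Q k r) c * cofactor (sres_mat P Q k 0) r 0)"
    by (simp add: coeff_sum mult.commute)
  consider "c \<le> k" | "k < c" "c < degree P + degree Q - k" | "degree P + degree Q - k \<le> c"
    by linarith
  then show "coeff (sres_poly P Q k) c = coeff (\<Sum>r<?n. Polynomial.smult (cofactor (sres_mat P Q k 0) r 0) (sres_row P Q k r)) c"
  proof cases
    case 1
    then show ?thesis unfolding rhs coeff_sres_poly sres_coeff_laplace[OF n] by simp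
  next
    case 2
    then show ?thesis using sres_coeff_repeated_column[of k c P Q]
      unfolding rhs coeff_sres_poly sres_coeff_laplace[OF n, symmetric] sres_coeff_det by simp
  next
    case 3
    then show ?thesis unfolding rhs coeff_sres_poly using assms
      by (simp add: coeff_sres_row_high)
  qed
qed

lemma sum_lessThan_add_split: "(\<Sum>r<a + (b::nat). f r) = (\<Sum>r<a. f r) + (\<Sum>s<b. f (a + s))"
  by (induct b) (auto simp: add.assoc)

lemma sres_row_combination_split:
  assumes "k \<le> degree Q" "k \<le> degree P"
  shows "(\<Sum>r<degree P + degree Q - 2*k. Polynomial.smult (w r) (sres_row P Q k r))
     = (\<Sum>r<degree Q - k. monom (w r) r) * P
       + (\<Sum>s<degree P - k. monom (w (degree Q - k + s)) s) * Q"
proof -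
  have n: "degree P + degree Q - 2*k = (degree Q - k) + (degree P - k)" using assms by auto
  have sm: "Polynomial.smult a (monom 1 r * R) = monom a r * R" for a r and R :: "'a poly"
    by (subst mult_smult_left[symmetric]) (simp add: smult_monom)
  show ?thesis unfolding n sum_lessThan_add_split sum_distrib_right
    by (intro arg_cong2[where f="(+)"] sum.cong) (auto simp: sres_row_def sm)
qed

lemma coeff_sum_monom: "coeff (\<Sum>s<m. monom (f s) s) c = (if c < m then f c else 0)"
  by (simp add: coeff_sum)

lemma sres_mat_transpose_mult_vec:
  assumes "w \<in> carrier_vec (degree P + degree Q - 2*k)" "c < degree P + degree Q - 2*k"
  shows "vec_index (transpose_mat (sres_mat P Q k j) *\<^sub>v w) c =
     coeff (\<Sum>r<degree P + degree Q - 2*k. Polynomial.smult (vec_index w r) (sres_row P Q k r))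
       (if c = 0 then j else k + c)"
proof -
  let ?n = "degree P + degree Q - 2*k"
  have "vec_index (transpose_mat (sres_mat P Q k j) *\<^sub>v w) c
      = row (transpose_mat (sres_mat P Q k j)) c \<bullet> w"
    using assms sres_mat_carrier[of P Q k j] by simp
  also have "\<dots> = col (sres_mat P Q k j) c \<bullet> w"
    using assms sres_mat_carrier[of P Q k j] by simp
  also have "\<dots> = (\<Sum>r<?n. sres_mat P Q k j $$ (r, c) * vec_index w r)"
    using assms sres_mat_carrier[of P Q k j] unfolding scalar_prod_def lessThan_atLeast0 by simp
  finally show ?thesis using assms by (simp add: coeff_sum sres_mat_index mult.commute)
qed

lemma sres_coeff_eq_0_iff:
  fixes P Q :: "'a::field poly"
  shows "sres_coeff P Q k j = 0 \<longleftrightarrow> (\<exists>w\<in>carrier_vec (degree P + degree Q - 2*k).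
     w \<noteq> 0\<^sub>v (degree P + degree Q - 2*k) \<and> (\<forall>c<degree P + degree Q - 2*k.
     coeff (\<Sum>r<degree P + degree Q - 2*k. Polynomial.smult (vec_index w r) (sres_row P Q k r))
       (if c = 0 then j else k + c) = 0))"
proof -
  let ?n = "degree P + degree Q - 2*k"
  let ?T = "transpose_mat (sres_mat P Q k j)"
  have T: "?T \<in> carrier_mat ?n ?n" using sres_mat_carrier by auto
  have "sres_coeff P Q k j = 0 \<longleftrightarrow> det ?T = 0"
    by (simp add: sres_coeff_det det_transpose[OF sres_mat_carrier])
  also have "\<dots> \<longleftrightarrow> (\<exists>w. w \<in> carrier_vec ?n \<and> w \<noteq> 0\<^sub>v ?n \<and> ?T *\<^sub>v w = 0\<^sub>v ?n)"
    by (rule det_0_iff_vec_prod_zero_field[OF T])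
  also have "\<dots> \<longleftrightarrow> (\<exists>w\<in>carrier_vec ?n. w \<noteq> 0\<^sub>v ?n \<and> (\<forall>c<?n. vec_index (?T *\<^sub>v w) c = 0))"
    using T by (auto simp: vec_eq_iff)
  finally show ?thesis by (auto simp: sres_mat_transpose_mult_vec)
qed

lemma sres_coeff_zero_if_syzygy:
  fixes P Q :: "'a::field poly"
  assumes "k \<le> degree Q" "degree Q < degree P"
    and "U * P + V * Q = 0" "U \<noteq> 0 \<or> V \<noteq> 0"
    and "\<And>c. degree Q - k \<le> c \<Longrightarrow> coeff U c = 0"
    and "\<And>c. degree P - k \<le> c \<Longrightarrow> coeff V c = 0"
  shows "sres_coeff P Q k j = 0"
proof -
  let ?q = "degree Q - k"
  let ?n = "degree P + degree Q - 2*k"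
  define w where "w = vec ?n (\<lambda>r. if r < ?q then coeff U r else coeff V (r - ?q))"
  have U: "(\<Sum>r<?q. monom (vec_index w r) r) = U"
    using assms(2,5) by (intro poly_eqI) (auto simp: coeff_sum_monom w_def)
  have V: "(\<Sum>s<degree P - k. monom (vec_index w (?q + s)) s) = V"
    using assms(1,2,6) by (intro poly_eqI) (auto simp: coeff_sum_monom w_def)
  have comb: "(\<Sum>r<?n. Polynomial.smult (vec_index w r) (sres_row P Q k r)) = 0"
    using sres_row_combination_split[of k Q P "vec_index w"] assms(1-3) U V by simp
  have "w \<noteq> 0\<^sub>v ?n"
  proof
    assume w0: "w = 0\<^sub>v ?n"
    have z: "vec_index w r = 0" if "r < ?n" for r using that w0 by simp
    have "coeff U c = 0" for c
      using z[of c] assms(1,2) assms(5)[of c] by (cases "c < ?q") (auto simp: w_def)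
    moreover have "coeff V c = 0" for c
    proof (cases "c < degree P - k")
      case True
      then have "?q + c < ?n" using assms(1,2) by linarith
      then show ?thesis using z[of "?q + c"] by (simp add: w_def)
    qed (use assms(6) in simp)
    ultimately have "U = 0" "V = 0" by (simp_all add: poly_eq_iff)
    then show False using assms(4) by simp
  qed
  then show ?thesis unfolding sres_coeff_eq_0_iff using comb by (auto simp: w_def)
qed

lemma syzygy_if_sres_coeff_zero:
  fixes P Q :: "'a::field poly"
  assumes "k \<le> degree Q" "degree Q < degree P" "sres_coeff P Q k k = 0"
  obtains U V where "U \<noteq> 0 \<or> V \<noteq> 0"
    and "\<And>c. degree P - k \<le> c \<Longrightarrow> coeff V c = 0"
    and "\<And>c. k \<le> c \<Longrightarrow> coeff (U * P + V * Q) c = 0"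
proof -
  let ?q = "degree Q - k"
  let ?n = "degree P + degree Q - 2*k"
  obtain w where w: "w \<in> carrier_vec ?n" "w \<noteq> 0\<^sub>v ?n"
    and cz: "\<And>c. c < ?n \<Longrightarrow> coeff (\<Sum>r<?n. Polynomial.smult (vec_index w r) (sres_row P Q k r))
                                    (if c = 0 then k else k + c) = 0"
    using assms(3) unfolding sres_coeff_eq_0_iff by blast
  define U where "U = (\<Sum>r<?q. monom (vec_index w r) r)"
  define V where "V = (\<Sum>s<degree P - k. monom (vec_index w (?q + s)) s)"
  have comb: "(\<Sum>r<?n. Polynomial.smult (vec_index w r) (sres_row P Q k r)) = U * P + V * Q"
    unfolding U_def V_def using assms(1,2) by (intro sres_row_combination_split) auto
  show ?thesis
  proof
    show "U \<noteq> 0 \<or> V \<noteq> 0"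
    proof (rule ccontr)
      assume "\<not> (U \<noteq> 0 \<or> V \<noteq> 0)"
      then have UV: "coeff U r = 0" "coeff V (r - ?q) = 0" for r by simp_all
      have "vec_index w r = 0" if "r < ?n" for r
        using UV[of r] that by (cases "r < ?q") (auto simp: U_def V_def coeff_sum_monom split: if_splits)
      then show False using w by (auto simp: vec_eq_iff)
    qed
    show "coeff V c = 0" if "degree P - k \<le> c" for c using that by (simp add: V_def coeff_sum_monom)
    show "coeff (U * P + V * Q) c = 0" if "k \<le> c" for c
    proof (cases "c < degree P + degree Q - k")
      case True
      then show ?thesis using cz[of "c - k"] that assms(1,2) comb by (cases "c = k") auto
    next
      case False
      then show ?thesis unfolding comb[symmetric] using assms(1,2)
        by (simp add: coeff_sum coeff_sres_row_high)
    qed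
  qed
qed

text \<open>Every common divisor of P and Q divides Sr_k, since Sr_k is a combination of
  multiples of P and Q.\<close>
lemma common_divisor_dvd_sres_poly:
  assumes "G dvd P" "G dvd Q" "k \<le> degree Q" "degree Q < degree P"
  shows "G dvd sres_poly P Q k"
  unfolding sres_poly_row_combination[OF assms(3,4)] sres_row_def using assms(1,2)
  by (intro dvd_sum dvd_smult) auto

lemma degree_sres_poly_le: "degree (sres_poly P Q k) \<le> k"
  by (rule degree_le) (auto simp: coeff_sres_poly)

text \<open>Below the degree of the gcd all subresultant coefficients vanish: the
  cofactors Q/G and P/G give a syzygy of low degree.\<close>
lemma sres_coeff_below_gcd_degree:
  fixes P Q :: "'a::field_gcd poly"
  assumes "P \<noteq> 0" "Q \<noteq> 0" "degree Q < degree P" "k < degree (gcd P Q)"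
  shows "sres_coeff P Q k j = 0"
proof -
  define G where "G = gcd P Q"
  define P' where "P' = P div G"
  define Q' where "Q' = Q div G"
  have G0: "G \<noteq> 0" using assms(1) by (simp add: G_def)
  have P: "P = P' * G" and Q: "Q = Q' * G" by (simp_all add: G_def P'_def Q'_def)
  have "P' \<noteq> 0" "Q' \<noteq> 0" using assms(1,2) P Q by auto
  then have dP: "degree P = degree P' + degree G" and dQ: "degree Q = degree Q' + degree G"
    using G0 P Q by (simp_all add: degree_mult_eq)
  have k: "k < degree G" using assms(4) by (simp add: G_def)
  show ?thesis
  proof (rule sres_coeff_zero_if_syzygy[of k Q P Q' "- P'"])
    show "Q' * P + - P' * Q = 0" unfolding P Q by (simp add: algebra_simps)
    show "Q' \<noteq> 0 \<or> - P' \<noteq> 0" using \<open>Q' \<noteq> 0\<close> by simp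
    show "coeff Q' c = 0" if "degree Q - k \<le> c" for c
      using that dQ k by (intro coeff_eq_0) linarith
    show "coeff (- P') c = 0" if "degree P - k \<le> c" for c
      using that dP k by (simp add: coeff_eq_0)
  qed (use assms(3) dQ k in auto)
qed

text \<open>At the degree d of the gcd, sr_{d,d} does not vanish: a syzygy with
  deg (U P + V Q) < d forces U P + V Q = 0, whence P/G divides V, which is too small.\<close>
lemma sres_coeff_at_gcd_degree:
  fixes P Q :: "'a::field_gcd poly"
  assumes "P \<noteq> 0" "Q \<noteq> 0" "degree Q < degree P"
  shows "sres_coeff P Q (degree (gcd P Q)) (degree (gcd P Q)) \<noteq> 0"
proof
  define G where "G = gcd P Q"
  define d where "d = degree G"
  define P' where "P' = P div G"
  define Q' where "Q' = Q div G"
  have G0: "G \<noteq> 0" using assms(1) by (simp add: G_def)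
  have P: "P = P' * G" and Q: "Q = Q' * G" by (simp_all add: G_def P'_def Q'_def)
  have "P' \<noteq> 0" using assms(1) P by auto
  then have dP: "degree P = degree P' + d" using G0 P d_def by (simp add: degree_mult_eq)
  have dQ: "d \<le> degree Q" using assms(2) unfolding d_def G_def by (simp add: dvd_imp_degree_le)
  assume "sres_coeff P Q (degree (gcd P Q)) (degree (gcd P Q)) = 0"
  then have "sres_coeff P Q d d = 0" by (simp add: d_def G_def)
  then obtain U V where UV: "U \<noteq> 0 \<or> V \<noteq> 0"
    and V: "\<And>c. degree P - d \<le> c \<Longrightarrow> coeff V c = 0"
    and high: "\<And>c. d \<le> c \<Longrightarrow> coeff (U * P + V * Q) c = 0"
    by (rule syzygy_if_sres_coeff_zero[OF dQ assms(3)]) blast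
  have comb0: "U * P + V * Q = 0"
  proof (rule ccontr)
    assume nz: "U * P + V * Q \<noteq> 0"
    have "G dvd U * P + V * Q" by (simp add: G_def)
    then have "d \<le> degree (U * P + V * Q)" using nz d_def by (simp add: dvd_imp_degree_le)
    then have "coeff (U * P + V * Q) (degree (U * P + V * Q)) = 0" by (rule high)
    then show False using nz leading_coeff_0_iff by blast
  qed
  then have "(U * P' + V * Q') * G = 0" unfolding P Q by (simp add: algebra_simps)
  then have "U * P' + V * Q' = 0" using G0 by simp
  then have "V * Q' = P' * (- U)" by (simp add: algebra_simps eq_neg_iff_add_eq_0)
  then have "P' dvd V * Q'" by (rule dvdI)
  moreover have "coprime P' Q'"
    unfolding P'_def Q'_def G_def by (rule div_gcd_coprime) (use assms(1) in auto)
  ultimately have "P' dvd V" by (simp add: coprime_dvd_mult_left_iff)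
  have "V = 0"
  proof (rule ccontr)
    assume "V \<noteq> 0"
    then have "\<not> degree P - d \<le> degree V" using V[of "degree V"] by auto
    moreover have "degree P' \<le> degree V" using \<open>P' dvd V\<close> \<open>V \<noteq> 0\<close> by (rule dvd_imp_degree_le)
    ultimately show False using dP by linarith
  qed
  then show False using UV comb0 assms(1) by simp
qed

lemma degree_gcd_eq_first_nonzero_sres:
  fixes P Q :: "'a::field_gcd poly"
  assumes "P \<noteq> 0" "Q \<noteq> 0" "degree Q < degree P"
    and "\<And>j. j < i \<Longrightarrow> sres_coeff P Q j j = 0" "sres_coeff P Q i i \<noteq> 0"
  shows "degree (gcd P Q) = i"
proof -
  have "\<not> degree (gcd P Q) < i" using sres_coeff_at_gcd_degree[OF assms(1-3)] assms(4) by blast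
  moreover have "\<not> i < degree (gcd P Q)" using sres_coeff_below_gcd_degree[OF assms(1-3)] assms(5) by blast
  ultimately show ?thesis by simp
qed

subsection \<open>Specialization and the power defect\<close>

lemma (in comm_ring_hom) sres_coeff_map_poly:
  assumes "degree (map_poly hom P) = degree P" "degree (map_poly hom Q) = degree Q"
  shows "hom (sres_coeff P Q k j) = sres_coeff (map_poly hom P) (map_poly hom Q) k j"
proof -
  have "sres_mat (map_poly hom P) (map_poly hom Q) k j = map_mat hom (sres_mat P Q k j)"
    by (rule eq_matI) (auto simp: sres_mat_def sub_mat_entry_def Let_def assms coeff_map_poly)
  then show ?thesis unfolding sres_coeff_det by simp
qed

lemma (in comm_ring_hom) sres_poly_map_poly:
  assumes "degree (map_poly hom P) = degree P" "degree (map_poly hom Q) = degree Q"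
  shows "map_poly hom (sres_poly P Q k) = sres_poly (map_poly hom P) (map_poly hom Q) k"
  by (rule poly_eqI) (simp add: coeff_map_poly coeff_sres_poly sres_coeff_map_poly[OF assms])

text \<open>It vanishes exactly when Sr_i is s times the i-th
  power of a linear polynomial, whose root is then -s'/(i s).\<close>
definition sres_defect :: "'a::comm_ring_1 poly \<Rightarrow> 'a poly \<Rightarrow> nat \<Rightarrow> 'a poly" where
  "sres_defect P Q i =
     Polynomial.smult ((of_nat i * sres_coeff P Q i i) ^ i) (sres_poly P Q i)
     - Polynomial.smult (sres_coeff P Q i i) ([:sres_coeff P Q i (i - 1), of_nat i * sres_coeff P Q i i:] ^ i)"

lemma (in comm_ring_hom) sres_defect_map_poly:
  assumes "degree (map_poly hom P) = degree P" "degree (map_poly hom Q) = degree Q"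
  shows "map_poly hom (sres_defect P Q i) = sres_defect (map_poly hom P) (map_poly hom Q) i"
proof -
  interpret p: map_poly_comm_ring_hom hom ..
  have lin: "map_poly hom [:a, b:] = [:hom a, hom b:]" for a b
    by (rule poly_eqI) (simp add: coeff_map_poly coeff_pCons split: nat.split)
  show ?thesis
    by (simp add: sres_defect_def p.hom_minus map_poly_smult p.hom_power lin hom_mult hom_power hom_of_nat
        sres_poly_map_poly[OF assms] sres_coeff_map_poly[OF assms])
qed

lemma coeff_linear_power_below: "coeff ([:-z, 1:] ^ Suc n) n = - of_nat (Suc n) * (z::'a::comm_ring_1)"
proof (induct n)
  case (Suc n)
  have "[:-z, 1:] ^ Suc (Suc n) = Polynomial.smult (-z) ([:-z, 1:] ^ Suc n) + pCons 0 ([:-z, 1:] ^ Suc n)"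
    by simp
  then have "coeff ([:-z, 1:] ^ Suc (Suc n)) (Suc n)
      = - z * coeff ([:-z, 1:] ^ Suc n) (Suc n) + coeff ([:-z, 1:] ^ Suc n) n"
    by simp
  also have "\<dots> = - of_nat (Suc (Suc n)) * z"
    by (simp only: coeff_linear_power Suc) (simp add: algebra_simps)
  finally show ?case .
qed simp

lemma sres_defect_eq_0_if_power:
  assumes "sres_poly P Q i = Polynomial.smult (sres_coeff P Q i i) ([:-z0, 1:] ^ i)" "i \<noteq> 0"
  shows "sres_defect P Q i = 0"
proof -
  let ?s = "sres_coeff P Q i i"
  have "sres_coeff P Q i (i - 1) = coeff (sres_poly P Q i) (i - 1)" by (simp add: coeff_sres_poly)
  also have "\<dots> = ?s * coeff ([:-z0, 1:] ^ Suc (i - 1)) (i - 1)" using assms by simp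
  also have "\<dots> = of_nat i * ?s * - z0"
    using assms(2) by (simp only: coeff_linear_power_below Suc_pred' neq0_conv) (simp add: algebra_simps)
  finally have lin: "[:sres_coeff P Q i (i - 1), of_nat i * ?s:] = Polynomial.smult (of_nat i * ?s) [:-z0, 1:]"
    by simp
  show ?thesis unfolding sres_defect_def assms(1) lin smult_power smult_smult by (simp add: mult.commute)
qed

lemma common_root_if_sres_defect_eq_0:
  fixes P Q :: "'a::field_char_0 poly"
  assumes "sres_defect P Q i = 0" "poly P z = 0" "poly Q z = 0"
    and "i \<le> degree Q" "degree Q < degree P" "i \<noteq> 0" "sres_coeff P Q i i \<noteq> 0"
  shows "z = - sres_coeff P Q i (i - 1) / (of_nat i * sres_coeff P Q i i)"
proof -
  let ?s = "sres_coeff P Q i i" and ?s' = "sres_coeff P Q i (i - 1)"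
  have "[:-z, 1:] dvd sres_poly P Q i"
    using assms(2-5) by (intro common_divisor_dvd_sres_poly) (simp_all add: poly_eq_0_iff_dvd)
  then have "poly (sres_poly P Q i) z = 0" by (simp add: poly_eq_0_iff_dvd)
  then have "?s * (?s' + z * (of_nat i * ?s)) ^ i = 0"
    using arg_cong[OF assms(1), of "\<lambda>p. poly p z"] by (simp add: sres_defect_def)
  then have "z * (of_nat i * ?s) = - ?s'" using assms(7) by (simp add: eq_neg_iff_add_eq_0 add.commute)
  then show ?thesis using assms(6,7) by (simp add: field_simps)
qed

lemma complex_poly_single_root:
  fixes G :: "complex poly"
  assumes "degree G \<noteq> 0" and single: "\<And>z z'. poly G z = 0 \<Longrightarrow> poly G z' = 0 \<Longrightarrow> z = z'"
  obtains z0 where "G = Polynomial.smult (lead_coeff G) ([:-z0, 1:] ^ degree G)"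
proof -
  obtain root where G: "Polynomial.smult (lead_coeff G) (\<Prod>k<degree G. [:-root k, 1:]) = G"
    by (rule complex_poly_decompose')
  have "lead_coeff G \<noteq> 0" using assms(1) by auto
  then have roots: "poly G (root k) = 0" if "k < degree G" for k
  proof -
    have "poly (\<Prod>k<degree G. [:-root k, 1:]) (root k) = 0"
      using that by (auto simp: poly_prod)
    then show ?thesis by (subst G[symmetric]) simp
  qed
  define z0 where "z0 = root 0"
  have "poly G z0 = 0" unfolding z0_def using assms(1) by (intro roots) simp
  then have "root k = z0" if "k < degree G" for k using single roots[OF that] by blast
  then have "(\<Prod>k<degree G. [:-root k, 1:]) = [:-z0, 1:] ^ degree G" by simp
  then show ?thesis using G by (intro that[of z0]) simp
qed

text \<open>Indeed
  Sr_i is then a constant multiple of gcd(P,Q), whose roots are the common roots.\<close>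
lemma sres_defect_single_common_root:
  fixes P Q :: "complex poly"
  assumes "degree Q < degree P" "i \<noteq> 0" "i \<le> degree Q"
    and "\<And>j. j < i \<Longrightarrow> sres_coeff P Q j j = 0" "sres_coeff P Q i i \<noteq> 0"
    and single: "\<And>z z'. poly P z = 0 \<Longrightarrow> poly Q z = 0 \<Longrightarrow> poly P z' = 0 \<Longrightarrow> poly Q z' = 0 \<Longrightarrow> z = z'"
  shows "sres_defect P Q i = 0"
proof -
  define G where "G = gcd P Q"
  define S where "S = sres_poly P Q i"
  have Q0: "Q \<noteq> 0" and P0: "P \<noteq> 0" using assms(1-3) by auto
  have dG: "degree G = i"
    unfolding G_def by (rule degree_gcd_eq_first_nonzero_sres[OF P0 Q0 assms(1,4,5)])
  have "coeff S i \<noteq> 0" using assms(5) by (simp add: S_def coeff_sres_poly)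
  then have S0: "S \<noteq> 0" and dS: "degree S = i"
    using degree_sres_poly_le[of P Q i] le_degree unfolding S_def by (auto intro: antisym)
  have "G dvd S" unfolding S_def G_def using assms(1,3)
    by (intro common_divisor_dvd_sres_poly) auto
  then obtain t where t: "S = G * t" by (elim dvdE)
  then have "degree t = 0" using S0 dS dG by (auto simp: degree_mult_eq)
  then obtain c where c: "t = [:c:]" by (rule degree_eq_zeroE)
  then have "c \<noteq> 0" using S0 t by auto
  have common: "poly P z = 0 \<and> poly Q z = 0" if "poly S z = 0" for z
  proof -
    have "poly G z = 0" using that t c \<open>c \<noteq> 0\<close> by simp
    moreover have "G dvd P" "G dvd Q" by (simp_all add: G_def)
    ultimately show ?thesis by (auto simp: dvd_def)
  qed
  have "z = z'" if "poly S z = 0" "poly S z' = 0" for z z'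
    using common[OF that(1)] common[OF that(2)] single by blast
  then obtain z0 where "S = Polynomial.smult (lead_coeff S) ([:-z0, 1:] ^ degree S)"
    using dS assms(2) complex_poly_single_root[of S] by auto
  then have "sres_poly P Q i = Polynomial.smult (sres_coeff P Q i i) ([:-z0, 1:] ^ i)"
    using dS by (simp add: S_def coeff_sres_poly)
  then show ?thesis using assms(2) by (rule sres_defect_eq_0_if_power)
qed

subsection \<open>Zero sets of complex bivariate polynomials\<close>

definition evalC2 :: "complex poly poly \<Rightarrow> complex \<Rightarrow> complex \<Rightarrow> complex" where
  "evalC2 f x y = poly (map_poly (\<lambda>c. poly c x) f) y"

lemma evalC2_hom: "comm_ring_hom (\<lambda>f. evalC2 f x y)"
proof -
  interpret m: map_poly_comm_ring_hom "\<lambda>c. poly c x" ..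
  show ?thesis by unfold_locales (auto simp: evalC2_def m.hom_mult m.hom_add)
qed

lemma evalC2_mult [simp]: "evalC2 (f * g) x y = evalC2 f x y * evalC2 g x y"
  and evalC2_add [simp]: "evalC2 (f + g) x y = evalC2 f x y + evalC2 g x y"
  and evalC2_prod_mset: "evalC2 (prod_mset M) x y = prod_mset (image_mset (\<lambda>g. evalC2 g x y) M)"
proof -
  interpret e: comm_ring_hom "\<lambda>f. evalC2 f x y" by (rule evalC2_hom)
  show "evalC2 (f * g) x y = evalC2 f x y * evalC2 g x y" by (rule e.hom_mult)
  show "evalC2 (f + g) x y = evalC2 f x y + evalC2 g x y" by (rule e.hom_add)
  show "evalC2 (prod_mset M) x y = prod_mset (image_mset (\<lambda>g. evalC2 g x y) M)"
    by (rule e.hom_prod_mset)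
qed

lemma evalC2_const [simp]: "evalC2 [:c:] x y = poly c x"
  by (cases "c = 0") (simp_all add: evalC2_def)

lemma evalC2_dvd: "g dvd f \<Longrightarrow> evalC2 g x y = 0 \<Longrightarrow> evalC2 f x y = 0"
  by (elim dvdE) simp

lemma prime_factor_vanishing:
  assumes "f \<noteq> 0" "evalC2 f a b = 0"
  obtains g where "prime g" "g dvd f" "evalC2 g a b = 0"
proof -
  have "f dvd prod_mset (prime_factorization f)"
    using prod_mset_prime_factorization_weak[OF assms(1)] by (metis dvd_refl normalize_dvd_iff)
  then have "evalC2 (prod_mset (prime_factorization f)) a b = 0" using assms(2) evalC2_dvd by blast
  then have "prod_mset (image_mset (\<lambda>g. evalC2 g a b) (prime_factorization f)) = 0"
    by (simp add: evalC2_prod_mset)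
  then obtain g where "g \<in># prime_factorization f" "evalC2 g a b = 0" by auto
  then show ?thesis using that in_prime_factors_imp_prime in_prime_factors_imp_dvd by blast
qed

lemma line_factor_dvd:
  fixes g :: "complex poly poly"
  assumes "map_poly (\<lambda>c. poly c x0) g = 0"
  shows "[:[:-x0, 1:]:] dvd g"
  unfolding const_poly_dvd_iff
proof
  fix n
  have "poly (coeff g n) x0 = coeff (map_poly (\<lambda>c. poly c x0) g) n" by (simp add: coeff_map_poly)
  then have "poly (coeff g n) x0 = 0" using assms by simp
  then show "[:-x0, 1:] dvd coeff g n" by (simp add: dvd_iff_poly_eq_0)
qed

lemma prime_line_factor:
  assumes g: "prime (g :: complex poly poly)" and d: "[:[:-x0, 1:]:] dvd g"
  shows "g dvd [:[:-x0, 1:]:]" "degree g = 0"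
proof -
  obtain r where r: "g = [:[:-x0, 1:]:] * r" using d by (elim dvdE)
  have "\<not> is_unit ([:[:-x0, 1:]:] :: complex poly poly)" by (simp add: is_unit_poly_iff)
  then have u: "is_unit r" using prime_elem_imp_irreducible[OF prime_imp_prime_elem[OF g]] r
    by (metis irreducibleD)
  then show "g dvd [:[:-x0, 1:]:]" using r by (metis dvd_mult_unit_iff dvd_refl)
  show "degree g = 0" using u r by (auto simp: is_unit_poly_iff degree_mult_eq)
qed

lemma complex_poly_root_exists:
  assumes "degree (p :: complex poly) \<noteq> 0"
  obtains z where "poly p z = 0"
proof -
  have "\<not> constant (poly p)" using assms by (simp add: constant_degree)
  then show ?thesis using fundamental_theorem_of_algebra that by blast
qed

lemma prime_zero_set_infinite:
  assumes g: "prime (g :: complex poly poly)"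
  shows "infinite {(x, y). evalC2 g x y = 0}"
proof (cases "degree g = 0")
  case True
  then obtain c where gc: "g = [:c:]" by (rule degree_eq_zeroE)
  have "\<not> is_unit g" "g \<noteq> 0" using g by (auto simp: prime_def)
  then have "degree c \<noteq> 0" using gc by (auto simp: is_unit_poly_iff elim: degree_eq_zeroE)
  then obtain x0 where x0: "poly c x0 = 0" by (rule complex_poly_root_exists)
  have "range (Pair x0) \<subseteq> {(x, y). evalC2 g x y = 0}" using x0 gc by auto
  moreover have "infinite (range (Pair x0 :: complex \<Rightarrow> _))"
    using finite_imageD[of "Pair x0" UNIV] infinite_UNIV_char_0 by (auto simp: inj_def)
  ultimately show ?thesis using infinite_super by blast
next
  case False
  let ?lc = "lead_coeff g"
  have "?lc \<noteq> 0" using g by auto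
  then have fin: "finite {x. poly ?lc x = 0}" by (rule poly_roots_finite)
  have "UNIV - {x. poly ?lc x = 0} \<subseteq> fst ` {(x, y). evalC2 g x y = 0}"
  proof
    fix x assume "x \<in> UNIV - {x. poly ?lc x = 0}"
    then have "degree (map_poly (\<lambda>c. poly c x) g) = degree g" by (intro map_poly_degree_eq) simp
    then obtain y where "poly (map_poly (\<lambda>c. poly c x) g) y = 0"
      using False complex_poly_root_exists by metis
    then show "x \<in> fst ` {(x, y). evalC2 g x y = 0}" by (force simp: evalC2_def)
  qed
  then show ?thesis using fin infinite_UNIV_char_0 finite_subset
    by (metis Diff_infinite_finite finite_imageI)
qed

lemma finite_fibres:
  assumes "finite X" "\<And>x0. x0 \<in> X \<Longrightarrow> map_poly (\<lambda>c. poly c x0) g \<noteq> 0"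
  shows "finite (\<Union>x0\<in>X. {x0} \<times> {y. evalC2 g x0 y = 0})"
  using assms by (auto intro!: poly_roots_finite simp: evalC2_def)

text \<open>In the set I of combinations u g + v K, an element h of minimal degree divides
  a nonzero constant multiple of every element of I (pseudo-division by h leaves a
  remainder in I of smaller degree, which must be 0).\<close>
lemma min_degree_combination_dvd:
  fixes g K h :: "'a::idom poly"
  defines "I \<equiv> {u * g + v * K | u v. True}"
  assumes "h \<in> I" "h \<noteq> 0" and minimal: "\<And>r. r \<in> I \<Longrightarrow> r \<noteq> 0 \<Longrightarrow> degree h \<le> degree r"
    and "F \<in> I"
  obtains c where "c \<noteq> 0" "h dvd Polynomial.smult c F"
proof -
  obtain q r where qr: "pseudo_divmod F h = (q, r)" by force
  define c where "c = lead_coeff h ^ (Suc (degree F) - degree h)"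
  have eq: "Polynomial.smult c F = h * q + r" using pseudo_divmod(1)[OF assms(3) qr] unfolding c_def .
  have c0: "c \<noteq> 0" using assms(3) unfolding c_def by simp
  obtain u v where h: "h = u * g + v * K" using assms(2) unfolding I_def by blast
  obtain u' v' where F: "F = u' * g + v' * K" using assms(5) unfolding I_def by blast
  have "r = ([:c:] * u' - u * q) * g + ([:c:] * v' - v * q) * K"
    using eq unfolding F h by (simp add: algebra_simps smult_add_right)
  then have "r \<in> I" unfolding I_def by blast
  have "r = 0"
  proof (rule ccontr)
    assume "r \<noteq> 0"
    then have "degree h \<le> degree r" using minimal \<open>r \<in> I\<close> by blast
    then show False using pseudo_divmod(2)[OF assms(3) qr] \<open>r \<noteq> 0\<close> by simp
  qed
  then have "h dvd Polynomial.smult c F" using eq by simp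
  then show ?thesis using c0 that by blast
qed

lemma prime_coprime_bezout:
  fixes g K :: "complex poly poly"
  assumes g: "prime g" and dg: "degree g \<noteq> 0" and nd: "\<not> g dvd K"
  obtains u v e where "u * g + v * K = [:e:]" "e \<noteq> 0"
proof -
  define I where "I = {u * g + v * K | u v. True}"
  have gI: "g \<in> I" and KI: "K \<in> I" unfolding I_def by (force intro: exI[of _ 1] exI[of _ 0])+
  have g0: "g \<noteq> 0" using g by auto
  define n where "n = (LEAST n. \<exists>h\<in>I. h \<noteq> 0 \<and> degree h = n)"
  obtain h where h: "h \<in> I" "h \<noteq> 0" "degree h = n"
    using LeastI_ex[of "\<lambda>n. \<exists>h\<in>I. h \<noteq> 0 \<and> degree h = n"] gI g0 unfolding n_def by blast
  have minimal: "degree h \<le> degree r" if "r \<in> I" "r \<noteq> 0" for r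
    unfolding h(3) n_def by (rule Least_le) (use that in blast)
  note dvd_multiple = min_degree_combination_dvd[OF h(1)[unfolded I_def] h(2) minimal[unfolded I_def]]
  have "degree h = 0"
  proof (rule ccontr)
    assume dh: "degree h \<noteq> 0"
    obtain c where c: "c \<noteq> 0" "h dvd Polynomial.smult c g"
      using dvd_multiple gI unfolding I_def by blast
    then obtain q where q: "[:c:] * g = h * q" by (auto simp: dvd_def)
    then have "g dvd h * q" by (metis dvd_triv_right)
    then consider "g dvd h" | "g dvd q" using prime_dvd_multD[OF g] by blast
    then show False
    proof cases
      case 1
      obtain c' where "c' \<noteq> 0" "h dvd Polynomial.smult c' K"
        using dvd_multiple KI unfolding I_def by blast
      then have "g dvd [:c':] * K" using 1 by (auto intro: dvd_trans)
      then have "g dvd [:c':]" using nd prime_dvd_multD[OF g] by blast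
      then show False using dg \<open>c' \<noteq> 0\<close> dvd_imp_degree_le[of g "[:c':]"] by simp
    next
      case 2
      then obtain t where "q = g * t" by (elim dvdE)
      then have "[:c:] * g = (h * t) * g" using q by (simp add: algebra_simps)
      then have ht: "[:c:] = h * t" by (simp only: mult_right_cancel[OF g0])
      then have "t \<noteq> 0" using c(1) by auto
      moreover have "degree (h * t) = 0" unfolding ht[symmetric] by simp
      ultimately show False using dh h(2) by (simp add: degree_mult_eq)
    qed
  qed
  then obtain e where e: "h = [:e:]" by (rule degree_eq_zeroE)
  obtain u v where "h = u * g + v * K" using h(1) unfolding I_def by blast
  then have "u * g + v * K = [:e:]" using e by simp
  moreover have "e \<noteq> 0" using e h(2) by simp
  ultimately show ?thesis by (rule that)
qed

lemma finite_common_zeros: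
  assumes g: "prime (g :: complex poly poly)" and nd: "\<not> g dvd K"
  shows "finite {(x, y). evalC2 g x y = 0 \<and> evalC2 K x y = 0}"
proof (cases "degree g = 0")
  case True
  then obtain c where gc: "g = [:c:]" by (rule degree_eq_zeroE)
  have "g \<noteq> 0" using g by auto
  then have c0: "c \<noteq> 0" using gc by simp
  have "finite (\<Union>x0\<in>{x. poly c x = 0}. {x0} \<times> {y. evalC2 K x0 y = 0})"
  proof (rule finite_fibres)
    show "finite {x. poly c x = 0}" using poly_roots_finite[OF c0] .
    fix x0 assume "x0 \<in> {x. poly c x = 0}"
    then have "[:[:-x0, 1:]:] dvd g" using gc by (simp add: poly_eq_0_iff_dvd)
    then have gL: "g dvd [:[:-x0, 1:]:]" by (rule prime_line_factor[OF g])
    show "map_poly (\<lambda>c. poly c x0) K \<noteq> 0"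
    proof
      assume "map_poly (\<lambda>c. poly c x0) K = 0"
      then have "g dvd K" using gL line_factor_dvd dvd_trans by blast
      then show False using nd by contradiction
    qed
  qed
  moreover have "{(x, y). evalC2 g x y = 0 \<and> evalC2 K x y = 0}
      \<subseteq> (\<Union>x0\<in>{x. poly c x = 0}. {x0} \<times> {y. evalC2 K x0 y = 0})"
    using gc by auto
  ultimately show ?thesis by (rule finite_subset[rotated])
next
  case False
  obtain u v e where E: "u * g + v * K = [:e:]" and e0: "e \<noteq> 0"
    using prime_coprime_bezout[OF g False nd] .
  have "finite (\<Union>x0\<in>{x. poly e x = 0}. {x0} \<times> {y. evalC2 g x0 y = 0})"
  proof (rule finite_fibres)
    show "finite {x. poly e x = 0}" using poly_roots_finite[OF e0] .
    show "map_poly (\<lambda>c. poly c x0) g \<noteq> 0" for x0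
    proof
      assume "map_poly (\<lambda>c. poly c x0) g = 0"
      then have "degree g = 0" using prime_line_factor(2)[OF g] line_factor_dvd by blast
      then show False using False by contradiction
    qed
  qed
  moreover have "{(x, y). evalC2 g x y = 0 \<and> evalC2 K x y = 0}
      \<subseteq> (\<Union>x0\<in>{x. poly e x = 0}. {x0} \<times> {y. evalC2 g x0 y = 0})"
  proof clarsimp
    fix x y assume "evalC2 g x y = 0" "evalC2 K x y = 0"
    then have "evalC2 (u * g + v * K) x y = 0" by simp
    then show "poly e x = 0" unfolding E by simp
  qed
  ultimately show ?thesis by (rule finite_subset[rotated])
qed

text \<open>Through a zero of f where K does not vanish pass infinitely many zeros of f
  where K does not vanish: take the prime factor of f vanishing at the point.\<close>
lemma infinite_zeros_avoiding:
  assumes "f \<noteq> 0" "evalC2 f a b = 0" "evalC2 K a b \<noteq> 0"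
  shows "infinite {(x, y). evalC2 f x y = 0 \<and> evalC2 K x y \<noteq> 0}"
proof -
  obtain g where g: "prime g" "g dvd f" "evalC2 g a b = 0"
    using prime_factor_vanishing[OF assms(1,2)] .
  have "\<not> g dvd K" using g(3) assms(3) evalC2_dvd by blast
  then have "infinite ({(x, y). evalC2 g x y = 0} - {(x, y). evalC2 g x y = 0 \<and> evalC2 K x y = 0})"
    using prime_zero_set_infinite[OF g(1)] finite_common_zeros[OF g(1)] by (rule_tac Diff_infinite_finite) auto
  moreover have "{(x, y). evalC2 g x y = 0} - {(x, y). evalC2 g x y = 0 \<and> evalC2 K x y = 0}
      \<subseteq> {(x, y). evalC2 f x y = 0 \<and> evalC2 K x y \<noteq> 0}"
    using g(2) evalC2_dvd by auto
  ultimately show ?thesis using infinite_super by blast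
qed

lemma vanishing_extends_over_finite_set:
  assumes "f \<noteq> 0" "finite E"
    and vanish: "\<And>x y. (x, y) \<notin> E \<Longrightarrow> evalC2 f x y = 0 \<Longrightarrow> evalC2 K x y = 0"
    and "evalC2 f a b = 0"
  shows "evalC2 K a b = 0"
proof (rule ccontr)
  assume "evalC2 K a b \<noteq> 0"
  then have "infinite {(x, y). evalC2 f x y = 0 \<and> evalC2 K x y \<noteq> 0}"
    using infinite_zeros_avoiding assms(1,4) by blast
  moreover have "{(x, y). evalC2 f x y = 0 \<and> evalC2 K x y \<noteq> 0} \<subseteq> E" using vanish by auto
  ultimately show False using assms(2) finite_subset by blast
qed

lemma eval2_hom: "comm_ring_hom (\<lambda>p. eval2 p x (y :: 'b::field_char_0))"
proof -
  interpret r: map_poly_comm_ring_hom "of_rat :: rat \<Rightarrow> 'b" ..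
  interpret ex: comm_ring_hom "\<lambda>c. poly (map_poly (of_rat :: rat \<Rightarrow> 'b) c) x"
    by unfold_locales (simp_all add: r.hom_mult r.hom_add)
  interpret exy: map_poly_comm_ring_hom "\<lambda>c. poly (map_poly (of_rat :: rat \<Rightarrow> 'b) c) x" ..
  show ?thesis by unfold_locales (simp_all add: eval2_def exy.hom_mult exy.hom_add)
qed

lemma eval2_mult [simp]: "eval2 (p * q) x y = eval2 p x y * eval2 q x (y :: 'b::field_char_0)"
proof -
  interpret e: comm_ring_hom "\<lambda>p. eval2 p x y" by (rule eval2_hom)
  show ?thesis by (rule e.hom_mult)
qed

lemma eval2_dvd: "p dvd q \<Longrightarrow> eval2 p x y = 0 \<Longrightarrow> eval2 q x (y :: 'b::field_char_0) = 0"
  by (elim dvdE) simp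

lemma eval2_const: "eval2 [:[:c:]:] x y = (of_rat c :: 'b::field_char_0)"
  by (cases "c = 0") (simp_all add: eval2_def)

lemma eval2_evalC2: "eval2 p x y = evalC2 (map_poly (map_poly of_rat) p) x y"
  unfolding eval2_def evalC2_def by (subst map_poly_map_poly) (auto simp: o_def)

lemma eval2_of_real: "eval2 p (of_real x) (of_real y) = (of_real (eval2 p x y) :: complex)"
proof -
  have of_real_of_rat: "(of_real (of_rat r :: real) :: complex) = of_rat r" for r
    by (cases r) (simp add: of_rat_rat)
  have inner: "poly (map_poly (of_rat :: rat \<Rightarrow> complex) c) (of_real x) = of_real (poly (map_poly of_rat c) x)" for c
    by (simp add: of_real_hom.poly_map_poly[symmetric] map_poly_map_poly o_def of_real_of_rat)
  show ?thesis
    by (simp add: eval2_def of_real_hom.poly_map_poly[symmetric] map_poly_map_poly o_def inner)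
qed

definition specialize :: "rat poly poly poly \<Rightarrow> 'b::field_char_0 \<Rightarrow> 'b \<Rightarrow> 'b poly" where
  "specialize P x y = map_poly (\<lambda>c. eval2 c x y) P"

lemma poly_specialize: "poly (specialize P x y) z = eval3 P x y z"
  by (simp add: specialize_def eval3_def)

lemma lead_coeff_constant_if_total_degree:
  fixes P :: "rat poly poly poly"
  assumes P0: "P \<noteq> 0" and td: "degree P = total_degree3 P"
  obtains c where "c \<noteq> 0" "lead_coeff P = [:[:c:]:]"
proof -
  define S where "S = {i + j + k | i j k. coeff (coeff (coeff P k) j) i \<noteq> 0}"
  have le: "m \<le> degree P" if "m \<in> S" for m
  proof -
    have "finite S"
    proof (rule finite_subset)
      show "S \<subseteq> (\<lambda>(i, j, k). i + j + k) ` (\<Union>k\<le>degree P. \<Union>j\<le>degree (coeff P k).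
               {..degree (coeff (coeff P k) j)} \<times> {j} \<times> {k})"
        unfolding S_def
      proof clarify
        fix i j k assume nz: "coeff (coeff (coeff P k) j) i \<noteq> 0"
        then have "coeff (coeff P k) j \<noteq> 0" "coeff P k \<noteq> 0" by auto
        then have "k \<le> degree P" "j \<le> degree (coeff P k)" "i \<le> degree (coeff (coeff P k) j)"
          using nz by (simp_all add: le_degree)
        then show "i + j + k \<in> (\<lambda>(i, j, k). i + j + k) ` (\<Union>k\<le>degree P. \<Union>j\<le>degree (coeff P k).
               {..degree (coeff (coeff P k) j)} \<times> {j} \<times> {k})"
          by (intro image_eqI[of _ _ "(i, j, k)"]) auto
      qed
    qed auto
    then show ?thesis using td that unfolding total_degree3_def S_def[symmetric] by simp
  qed
  define L where "L = lead_coeff P"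
  have L0: "L \<noteq> 0" using P0 by (simp add: L_def)
  have "degree L = 0"
  proof (rule ccontr)
    assume dL: "degree L \<noteq> 0"
    have "coeff (coeff L (degree L)) (degree (coeff L (degree L))) \<noteq> 0" using L0 by simp
    then have "degree (coeff L (degree L)) + degree L + degree P \<in> S" unfolding S_def L_def by blast
    then show False using le dL by fastforce
  qed
  then obtain l where L: "L = [:l:]" by (rule degree_eq_zeroE)
  then have l0: "l \<noteq> 0" using L0 by simp
  have "degree l = 0"
  proof (rule ccontr)
    assume dl: "degree l \<noteq> 0"
    have "coeff (coeff (coeff P (degree P)) 0) (degree l) \<noteq> 0"
      using l0 L by (simp add: L_def)
    then have "degree l + 0 + degree P \<in> S" unfolding S_def by blast
    then show False using le dl by fastforce
  qed
  then obtain c where "l = [:c:]" by (rule degree_eq_zeroE)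
  then show ?thesis using that l0 L unfolding L_def by simp
qed

lemma degree_specialize:
  assumes "degree P = total_degree3 P"
  shows "degree (specialize P x y) = degree P"
proof (cases "P = 0")
  case False
  then obtain c where "c \<noteq> 0" "lead_coeff P = [:[:c:]:]"
    using lead_coeff_constant_if_total_degree assms by blast
  then show ?thesis unfolding specialize_def by (intro map_poly_degree_eq) (simp add: eval2_const)
qed (simp add: specialize_def)

subsection \<open>The chain \<Theta>_i and the factors \<Delta>_i\<close>

lemma Theta_nonzero: "Theta P1 P2 j \<noteq> 0"
proof (induct j)
  case 0
  have "(\<Prod>q\<in>prime_factors (sres_coeff P1 P2 0 0). q) \<noteq> 0"
    by (subst prod_zero_iff) auto
  then show ?case by (simp add: sqfree_part_def)
qed simp

lemma Theta_dvd: "j \<le> i \<Longrightarrow> Theta P1 P2 i dvd Theta P1 P2 j"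
proof (induct i)
  case (Suc i)
  then show ?case by (cases "j = Suc i") (auto intro: dvd_trans[OF gcd_dvd1])
qed simp

lemma Theta_eq_Delta_mult: "1 \<le> i \<Longrightarrow> Theta P1 P2 (i - 1) = Delta P1 P2 i * Theta P1 P2 i"
  unfolding Delta_def using Theta_dvd[of "i - 1" i P1 P2] by simp

lemma Delta_nonzero: "1 \<le> i \<Longrightarrow> Delta P1 P2 i \<noteq> 0"
  using Theta_eq_Delta_mult[of i P1 P2] Theta_nonzero[of P1 P2 "i - 1"] by auto

lemma eval2_sqfree_part_zero:
  assumes "eval2 (sqfree_part R) x y = (0 :: 'b::field_char_0)"
  shows "eval2 R x y = 0"
proof -
  interpret e: comm_ring_hom "\<lambda>p. eval2 p x y" by (rule eval2_hom)
  have "(\<Prod>q\<in>prime_factors R. eval2 q x y) = 0" using assms by (simp add: sqfree_part_def e.hom_prod)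
  then obtain q where "q \<in> prime_factors R" "eval2 q x y = 0" by (subst (asm) prod_zero_iff) auto
  then show ?thesis using eval2_dvd in_prime_factors_imp_dvd by blast
qed

text \<open>Where \<Delta>_i vanishes, so does \<Theta>_{i-1}, hence every sr_{j,j} with j < i.\<close>
lemma lower_sres_vanish_if_Delta_zero:
  assumes "1 \<le> i" "eval2 (Delta P1 P2 i) x y = (0 :: 'b::field_char_0)" "j < i"
  shows "eval2 (sres_coeff P1 P2 j j) x y = 0"
proof -
  have "eval2 (Theta P1 P2 (i - 1)) x y = 0"
    using assms(2) Theta_eq_Delta_mult[OF assms(1), of P1 P2] by simp
  moreover have "j \<le> i - 1" using assms(3) by simp
  ultimately have Theta: "eval2 (Theta P1 P2 j) x y = 0"
    using eval2_dvd[OF Theta_dvd] by blast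
  show ?thesis
  proof (cases j)
    case 0
    then show ?thesis using Theta eval2_sqfree_part_zero by simp
  next
    case (Suc j')
    then show ?thesis using Theta eval2_dvd[OF gcd_dvd2] by simp
  qed
qed

lemma coeff_map_poly_eval2: "coeff (map_poly (\<lambda>c. eval2 c x y) W) k = eval2 (coeff W k) x y"
  by (simp add: coeff_map_poly eval2_def)

lemma sres_coeff_specialize:
  assumes "degree P1 = total_degree3 P1" "degree P2 = total_degree3 P2"
  shows "eval2 (sres_coeff P1 P2 k j) x y = sres_coeff (specialize P1 x y) (specialize P2 x y) k j"
  unfolding specialize_def
  by (rule comm_ring_hom.sres_coeff_map_poly[OF eval2_hom])
    (use degree_specialize[OF assms(1)] degree_specialize[OF assms(2)] in \<open>simp_all add: specialize_def\<close>)

lemma sres_defect_specialize: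
  assumes "degree P1 = total_degree3 P1" "degree P2 = total_degree3 P2"
  shows "map_poly (\<lambda>c. eval2 c x y) (sres_defect P1 P2 i) = sres_defect (specialize P1 x y) (specialize P2 x y) i"
  unfolding specialize_def
  by (rule comm_ring_hom.sres_defect_map_poly[OF eval2_hom])
    (use degree_specialize[OF assms(1)] degree_specialize[OF assms(2)] in \<open>simp_all add: specialize_def\<close>)

subsection \<open>From generic points to all points of \<Delta>_i = 0\<close>

lemma eval2_vanishing_extends:
  fixes f K :: "rat poly poly" and a b :: complex
  assumes "f \<noteq> 0" "finite E"
    and "\<And>x y. (x, y) \<notin> E \<Longrightarrow> eval2 f x y = 0 \<Longrightarrow> eval2 K x y = (0 :: complex)"
    and "eval2 f a b = 0"
  shows "eval2 K a b = 0"
proof -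
  have "map_poly (map_poly (of_rat :: rat \<Rightarrow> complex)) f \<noteq> 0"
    using assms(1) by simp
  then show ?thesis using assms(2-4) unfolding eval2_evalC2 by (rule vanishing_extends_over_finite_set)
qed

lemma sres_defect_vanishes_at_single_fibre:
  fixes x y :: complex
  assumes "degree P1 = total_degree3 P1" "degree P2 = total_degree3 P2" "degree P2 < degree P1"
    and "1 \<le> i" "i \<le> degree P2"
    and "eval2 (Delta P1 P2 i) x y = 0" "eval2 (sres_coeff P1 P2 i i) x y \<noteq> 0"
    and single: "\<And>z z'. (x, y, z) \<in> curveC P1 P2 \<Longrightarrow> (x, y, z') \<in> curveC P1 P2 \<Longrightarrow> z = z'"
  shows "map_poly (\<lambda>c. eval2 c x y) (sres_defect P1 P2 i) = 0"
  unfolding sres_defect_specialize[OF assms(1,2)]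
proof (rule sres_defect_single_common_root)
  show "degree (specialize P2 x y) < degree (specialize P1 x y)" "i \<le> degree (specialize P2 x y)"
    using assms(3,5) by (simp_all add: degree_specialize assms(1,2))
  show "sres_coeff (specialize P1 x y) (specialize P2 x y) j j = 0" if "j < i" for j
    using lower_sres_vanish_if_Delta_zero[OF assms(4,6) that] by (simp add: sres_coeff_specialize assms(1,2))
  show "sres_coeff (specialize P1 x y) (specialize P2 x y) i i \<noteq> 0"
    using assms(7) by (simp add: sres_coeff_specialize assms(1,2))
  show "z = z'" if "poly (specialize P1 x y) z = 0" "poly (specialize P2 x y) z = 0"
    "poly (specialize P1 x y) z' = 0" "poly (specialize P2 x y) z' = 0" for z z'
    using that by (intro single) (simp_all add: curveC_def poly_specialize)
qed (use assms(4) in simp)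

lemma pseudo_generic_single_fibre:
  assumes "pseudo_generic P1 P2"
  obtains F where "finite F"
    and "\<And>x y z z'. (x, y) \<notin> F \<Longrightarrow> (x, y, z) \<in> curveC P1 P2 \<Longrightarrow> (x, y, z') \<in> curveC P1 P2 \<Longrightarrow> z = z'"
proof -
  obtain F where F: "finite F"
    and unique: "\<forall>(x, y) \<in> (\<lambda>(x, y, z). (x, y)) ` curveC P1 P2 - F. \<exists>!z. (x, y, z) \<in> curveC P1 P2"
    using assms unfolding pseudo_generic_def by blast
  show ?thesis
  proof (rule that[OF F])
    fix x y z z' assume "(x, y) \<notin> F" and z: "(x, y, z) \<in> curveC P1 P2" and "(x, y, z') \<in> curveC P1 P2"
    moreover have "(x, y) \<in> (\<lambda>(x, y, z). (x, y)) ` curveC P1 P2" using z by (rule rev_image_eqI) simp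
    ultimately show "z = z'" using unique by blast
  qed
qed

text \<open>Pseudo-genericity makes the hypothesis of the previous lemma hold outside a finite
  set; the extension principle then carries the vanishing of the defect (times sr_{i,i})
  to every point of \<Delta>_i = 0, in particular to real points.\<close>
lemma sres_defect_vanishes_on_Delta_zero:
  fixes \<alpha> \<beta> :: real
  assumes "degree P1 = total_degree3 P1" "degree P2 = total_degree3 P2" "degree P2 < degree P1"
    and "pseudo_generic P1 P2" "1 \<le> i" "i \<le> degree P2"
    and "eval2 (Delta P1 P2 i) \<alpha> \<beta> = 0" "eval2 (sres_coeff P1 P2 i i) \<alpha> \<beta> \<noteq> 0"
  shows "sres_defect (specialize P1 \<alpha> \<beta>) (specialize P2 \<alpha> \<beta>) i = 0"
proof -
  define W where "W = sres_defect P1 P2 i"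
  define s where "s = sres_coeff P1 P2 i i"
  obtain F where F: "finite F" and single: "\<And>x y z z'. (x, y) \<notin> F \<Longrightarrow>
      (x, y, z) \<in> curveC P1 P2 \<Longrightarrow> (x, y, z') \<in> curveC P1 P2 \<Longrightarrow> z = z'"
    using pseudo_generic_single_fibre[OF assms(4)] by metis
  have generic: "eval2 (coeff W k * s) x y = 0"
    if "(x, y) \<notin> F" "eval2 (Delta P1 P2 i) x y = 0" for x y :: complex and k
  proof (cases "eval2 s x y = 0")
    case False
    have "map_poly (\<lambda>c. eval2 c x y) W = 0"
      unfolding W_def using False unfolding s_def
      by (rule sres_defect_vanishes_at_single_fibre[OF assms(1-3,5,6) that(2)]) (rule single[OF that(1)])
    then show ?thesis by (simp add: poly_eq_iff coeff_map_poly_eval2)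
  qed simp
  have "eval2 (coeff W k) \<alpha> \<beta> = 0" for k
  proof -
    have "eval2 (Delta P1 P2 i) (of_real \<alpha>) (of_real \<beta>) = (0 :: complex)"
      using assms(7) by (simp add: eval2_of_real)
    then have "eval2 (coeff W k * s) (of_real \<alpha>) (of_real \<beta>) = (0 :: complex)"
      using eval2_vanishing_extends[OF Delta_nonzero[OF assms(5)] F generic] by blast
    then show ?thesis using assms(8) by (simp add: eval2_of_real s_def)
  qed
  then have "map_poly (\<lambda>c. eval2 c \<alpha> \<beta>) W = 0" by (simp add: poly_eq_iff coeff_map_poly_eval2)
  then show ?thesis unfolding W_def sres_defect_specialize[OF assms(1,2)] .
qed

theorem proposition4:
  fixes P1 P2 :: "rat poly poly poly" and i :: nat and \<alpha> \<beta> \<gamma> :: real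
  assumes "gcd P1 P2 = 1"
    and "degree P1 = total_degree3 P1" and "degree P2 = total_degree3 P2"
    and "degree P1 > degree P2" and "degree P2 \<ge> 1"
    and "pseudo_generic P1 P2"
    and "1 \<le> i" and "i \<le> degree P2"
    and "(\<alpha>, \<beta>, \<gamma>) \<in> curveR P1 P2"
    and "eval2 (Delta P1 P2 i) \<alpha> \<beta> = 0"
    and "eval2 (sres_coeff P1 P2 i i) \<alpha> \<beta> \<noteq> 0"
  shows "\<gamma> = - eval2 (sres_coeff P1 P2 i (i - 1)) \<alpha> \<beta> / (of_nat i * eval2 (sres_coeff P1 P2 i i) \<alpha> \<beta>)"
proof -
  let ?p = "specialize P1 \<alpha> \<beta>" and ?q = "specialize P2 \<alpha> \<beta>"
  have defect: "sres_defect ?p ?q i = 0"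
    using assms(4) by (intro sres_defect_vanishes_on_Delta_zero assms(2,3,6-8,10,11))
  have roots: "poly ?p \<gamma> = 0" "poly ?q \<gamma> = 0"
    using assms(9) by (simp_all add: curveR_def poly_specialize)
  have degrees: "i \<le> degree ?q" "degree ?q < degree ?p"
    using assms(2-4,8) by (simp_all add: degree_specialize)
  have "\<gamma> = - sres_coeff ?p ?q i (i - 1) / (of_nat i * sres_coeff ?p ?q i i)"
    using common_root_if_sres_defect_eq_0[OF defect roots degrees] assms(7,11)
    by (simp add: sres_coeff_specialize assms(2,3))
  then show ?thesis by (simp add: sres_coeff_specialize assms(2,3))
qed

end
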